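(* For every integer $t\ge1$ there exist complex coefficients $a^{(t)}_H$, indexed by insects $H$ and depending only on $H$ and the activities, such that $a^{(t)}_H=0$ unless $H$ is connected and $|H|\le t$, and $p_t(G)=\sum_H a^{(t)}_H\,\mathbf 1[H\sqsubseteq G]$ for every insect $G$.
   Context: Fix a ground set of vertices and, for every hyperedge $e$ (finite vertex set), an activity $\varphi_e:\{+,-\}^e\to\mathbb C$ with $\varphi_e(-,\dots,-)=1$; write $\varphi_e(S)=\varphi_e(\sigma^S|_e)$ where $\sigma^S$ assigns $+$ exactly to the vertices of $S$. An insect is a pair $H=(S,E)$ where $S$ is a finite nonempty vertex set and $E$ is a finite set of hyperedges with $e\cap S\ne\emptyset$ for all $e\in E$; $|H|=|S|$; $H$ is connected if the hypergraph $(S,\{e\cap S:e\in E\})$ is connected. For an insect $G=(S,E)$ and nonempty $S'\subseteq S$, $G^+[S']=(S',\{e\in E:e\cap S'\neq\emptyset\})$; $H\sqsubseteq G$ means $H=G^+[S']$ for some such $S'$, with indicator $\mathbf 1[H\sqsubseteq G]$. For an insect $G=(S_0,E)$ define $e_0(G)=1$ and, for $i\ge1$, $e_i(G)=(-1)^i\sum_{S\subseteq S_0,|S|=i}\prod_{e\in E: e\cap S\ne\emptyset}\varphi_e(S)$ (zero if $i>|S_0|$), and define $p_t(G)$ recursively by Newton's identities $p_t=\sum_{i=1}^{t-1}(-1)^{i-1}p_{t-i}e_i+(-1)^{t-1}t\,e_t$. (When $Z_G(\lambda)=\sum_i(-1)^ie_i(G)\lambda^i$ has roots $r_1,\dots,r_n$,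 $p_t(G)=\sum_j r_j^{-t}$.) *)

theory Defs
  imports Complex_Main
begin

text \<open>The activity is given as phi e A for A a subset of e (the set of
  vertices of e carrying +); phi e {} = 1 is the normalisation. For a vertex set S,
  phi_e(S) of the paper is phi e (S \<inter> e).\<close>

type_synonym 'v insect = "'v set \<times> 'v set set"

definition is_insect :: "'v insect \<Rightarrow> bool" where
  "is_insect H \<longleftrightarrow> finite (fst H) \<and> fst H \<noteq> {} \<and> finite (snd H) \<and>
     (\<forall>e\<in>snd H. finite e \<and> e \<inter> fst H \<noteq> {})"

definition insect_size :: "'v insect \<Rightarrow> nat" where
  "insect_size H = card (fst H)"

definition adj_rel :: "'v insect \<Rightarrow> ('v \<times> 'v) set" where
  "adj_rel H = {(u, w). \<exists>e\<in>snd H. u \<in> e \<inter> fst H \<and> w \<in> e \<inter> fst H}"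

definition insect_connected :: "'v insect \<Rightarrow> bool" where
  "insect_connected H \<longleftrightarrow> (\<forall>u\<in>fst H. \<forall>w\<in>fst H. (u, w) \<in> (adj_rel H)\<^sup>*)"

definition induced_plus :: "'v insect \<Rightarrow> 'v set \<Rightarrow> 'v insect" where
  "induced_plus G S' = (S', {e \<in> snd G. e \<inter> S' \<noteq> {}})"

definition sub_insect :: "'v insect \<Rightarrow> 'v insect \<Rightarrow> bool" where
  "sub_insect H G \<longleftrightarrow> (\<exists>S'. S' \<noteq> {} \<and> S' \<subseteq> fst G \<and> H = induced_plus G S')"

definition elem_sym :: "('v set \<Rightarrow> 'v set \<Rightarrow> complex) \<Rightarrow> 'v insect \<Rightarrow> nat \<Rightarrow> complex" where
  "elem_sym \<phi> G i = (if i = 0 then 1 else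
     (-1) ^ i * (\<Sum>S\<in>{S. S \<subseteq> fst G \<and> card S = i}.
        \<Prod>e\<in>{e \<in> snd G. e \<inter> S \<noteq> {}}. \<phi> e (S \<inter> e)))"

text \<open>Newton's identities: p_t = sum_{i=1}^{t-1} (-1)^(i-1) p_{t-i} e_i + (-1)^(t-1) t e_t
  for t \<ge> 1 (the value at t = 0 is an irrelevant convention).\<close>
function newton_p :: "(nat \<Rightarrow> complex) \<Rightarrow> nat \<Rightarrow> complex" where
  "newton_p e t = (if t = 0 then 0 else
     (\<Sum>i\<in>{1..<t}. (-1) ^ (i - 1) * newton_p e (t - i) * e i)
       + (-1) ^ (t - 1) * of_nat t * e t)"
  by auto
termination
  by (relation "measure snd") auto

definition power_sum :: "('v set \<Rightarrow> 'v set \<Rightarrow> complex) \<Rightarrow> nat \<Rightarrow> 'v insect \<Rightarrow> complex" where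
  "power_sum \<phi> t G = newton_p (elem_sym \<phi> G) t"

end

theory Submission
  imports Defs "HOL-Computational_Algebra.Formal_Power_Series"
begin

text \<open>The power sums are obtained from the elementary symmetric functions by Newton's
  identities, i.e. by sums and products alone. Each \<open>e\<^sub>i(G)\<close> is a sum over
  \<open>i\<close>-vertex subsets, so it is a sum of a coefficient function over the induced
  sub-insects of \<open>G\<close>, supported on insects of size \<open>i\<close>. Such cluster expansions
  are closed under sums and products, sizes adding under products; hence \<open>p\<^sub>t\<close> has
  one supported on insects of size at most \<open>t\<close>.

  Connectivity comes from additivity. If the vertices of \<open>G\<close> split into parts \<open>A\<close>, \<open>B\<close>
  such that no hyperedge meets both, then \<open>Z\<^sub>G = Z\<^sub>A Z\<^sub>B\<close>, so
  \<open>p\<^sub>t(G) = p\<^sub>t(A) + p\<^sub>t(B)\<close>. Comparing the expansions of both sides,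
  by induction on the size, the coefficient of every such disconnected insect vanishes.\<close>

section \<open>Newton's identities as a logarithmic derivative\<close>

definition partition_fps :: "(nat \<Rightarrow> complex) \<Rightarrow> complex fps" where
  "partition_fps e = Abs_fps (\<lambda>i. (-1) ^ i * e i)"

definition newton_fps :: "(nat \<Rightarrow> complex) \<Rightarrow> complex fps" where
  "newton_fps e = Abs_fps (newton_p e)"

lemma newton_p_0 [simp]: "newton_p e 0 = 0"
  by (subst newton_p.simps) simp

text \<open>Formally \<open>P = -X Z'/Z\<close>, the generating function of the inverse power sums of the roots.\<close>
lemma partition_fps_mult_newton_fps:
  assumes e0: "e 0 = 1"
  shows "partition_fps e * newton_fps e = - (fps_X * fps_deriv (partition_fps e))"
proof (rule fps_ext)
  fix n
  show "fps_nth (partition_fps e * newton_fps e) n = fps_nth (- (fps_X * fps_deriv (partition_fps e))) n"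
  proof (cases "n = 0")
    case True
    then show ?thesis by (simp add: newton_fps_def partition_fps_def)
  next
    case False
    have rec: "newton_p e n = (\<Sum>i\<in>{1..<n}. (-1) ^ (i - 1) * newton_p e (n - i) * e i)
       + (-1) ^ (n - 1) * of_nat n * e n"
      using False by (subst newton_p.simps) simp
    have range: "{0..n} = insert 0 (insert n {1..<n})" using False by auto
    have "fps_nth (partition_fps e * newton_fps e) n = (\<Sum>i=0..n. (-1) ^ i * e i * newton_p e (n - i))"
      by (simp add: fps_mult_nth partition_fps_def newton_fps_def)
    also have "\<dots> = newton_p e n + (\<Sum>i\<in>{1..<n}. (-1) ^ i * e i * newton_p e (n - i))"
      using False e0 by (simp add: range)
    also have "(\<Sum>i\<in>{1..<n}. (-1) ^ i * e i * newton_p e (n - i))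
       = - (\<Sum>i\<in>{1..<n}. (-1) ^ (i - 1) * newton_p e (n - i) * e i)"
      by (simp add: sum_negf[symmetric] power_eq_if) (rule sum.cong; auto simp: power_eq_if)
    also have "newton_p e n + - (\<Sum>i\<in>{1..<n}. (-1) ^ (i - 1) * newton_p e (n - i) * e i)
       = (-1) ^ (n - 1) * of_nat n * e n"
      using rec by simp
    also have "\<dots> = fps_nth (- (fps_X * fps_deriv (partition_fps e))) n"
      using False by (cases n) (simp_all add: partition_fps_def fps_X_mult_nth)
    finally show ?thesis .
  qed
qed

lemma newton_p_partition_fps_mult:
  assumes "e 0 = 1" "e\<^sub>1 0 = 1" "e\<^sub>2 0 = 1"
    and factor: "partition_fps e = partition_fps e\<^sub>1 * partition_fps e\<^sub>2"
  shows "newton_p e t = newton_p e\<^sub>1 t + newton_p e\<^sub>2 t"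
proof -
  let ?Z = "partition_fps e" and ?Z\<^sub>1 = "partition_fps e\<^sub>1" and ?Z\<^sub>2 = "partition_fps e\<^sub>2"
  have "?Z * (newton_fps e\<^sub>1 + newton_fps e\<^sub>2) = ?Z\<^sub>2 * (?Z\<^sub>1 * newton_fps e\<^sub>1) + ?Z\<^sub>1 * (?Z\<^sub>2 * newton_fps e\<^sub>2)"
    by (simp add: factor algebra_simps)
  also have "\<dots> = - (fps_X * fps_deriv ?Z)"
    using partition_fps_mult_newton_fps[of e\<^sub>1] partition_fps_mult_newton_fps[of e\<^sub>2] assms
    by (simp add: factor algebra_simps)
  also have "\<dots> = ?Z * newton_fps e"
    using partition_fps_mult_newton_fps[of e] assms by simp
  finally have eq: "?Z * (newton_fps e\<^sub>1 + newton_fps e\<^sub>2) = ?Z * newton_fps e" .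
  have "fps_nth ?Z 0 \<noteq> 0"
    using assms by (simp add: partition_fps_def)
  then have "?Z \<noteq> 0" by auto
  then have "newton_fps e\<^sub>1 + newton_fps e\<^sub>2 = newton_fps e"
    using eq by simp
  then have "fps_nth (newton_fps e\<^sub>1 + newton_fps e\<^sub>2) t = fps_nth (newton_fps e) t"
    by simp
  then show ?thesis
    by (simp add: newton_fps_def)
qed

section \<open>Cluster expansions\<close>

lemma fst_induced_plus [simp]: "fst (induced_plus G U) = U"
  and snd_induced_plus [simp]: "snd (induced_plus G U) = {e \<in> snd G. e \<inter> U \<noteq> {}}"
  by (simp_all add: induced_plus_def)

lemma is_insect_induced_plus:
  "is_insect G \<Longrightarrow> U \<subseteq> fst G \<Longrightarrow> U \<noteq> {} \<Longrightarrow> is_insect (induced_plus G U)"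
  unfolding is_insect_def by (auto intro: finite_subset)

lemma induced_plus_induced_plus [simp]:
  "V \<subseteq> U \<Longrightarrow> induced_plus (induced_plus G U) V = induced_plus G V"
  by (auto simp: induced_plus_def)

lemma induced_plus_fst: "is_insect H \<Longrightarrow> induced_plus H (fst H) = H"
  unfolding is_insect_def induced_plus_def by (cases H) auto

definition has_cluster_expansion ::
    "nat \<Rightarrow> ('v insect \<Rightarrow> complex) \<Rightarrow> ('v insect \<Rightarrow> complex) \<Rightarrow> bool" where
  "has_cluster_expansion t f c \<longleftrightarrow>
     (\<forall>H. c H \<noteq> 0 \<longrightarrow> is_insect H \<and> insect_size H \<le> t) \<and>
     (\<forall>G. is_insect G \<longrightarrow> f G = (\<Sum>U\<in>Pow (fst G) - {{}}. c (induced_plus G U)))"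

lemma has_cluster_expansionD:
  assumes "has_cluster_expansion t f c"
  shows "c H \<noteq> 0 \<Longrightarrow> is_insect H \<and> insect_size H \<le> t"
    and "is_insect G \<Longrightarrow> f G = (\<Sum>U\<in>Pow (fst G) - {{}}. c (induced_plus G U))"
  using assms unfolding has_cluster_expansion_def by blast+

lemma has_cluster_expansion_zero: "has_cluster_expansion t (\<lambda>G. 0) (\<lambda>H. 0)"
  unfolding has_cluster_expansion_def by simp

lemma has_cluster_expansion_add:
  assumes f: "has_cluster_expansion t f c" and g: "has_cluster_expansion t g d"
  shows "has_cluster_expansion t (\<lambda>G. f G + g G) (\<lambda>H. c H + d H)"
  unfolding has_cluster_expansion_def
proof (rule conjI; intro allI impI)
  fix H assume "c H + d H \<noteq> 0"
  then have "c H \<noteq> 0 \<or> d H \<noteq> 0" by auto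
  then show "is_insect H \<and> insect_size H \<le> t"
    using has_cluster_expansionD(1)[OF f] has_cluster_expansionD(1)[OF g] by blast
next
  fix G :: "'a insect" assume "is_insect G"
  then show "f G + g G = (\<Sum>U\<in>Pow (fst G) - {{}}. c (induced_plus G U) + d (induced_plus G U))"
    using has_cluster_expansionD(2)[OF f] has_cluster_expansionD(2)[OF g] by (simp add: sum.distrib)
qed

lemma has_cluster_expansion_scale:
  "has_cluster_expansion t f c \<Longrightarrow> has_cluster_expansion t (\<lambda>G. k * f G) (\<lambda>H. k * c H)"
  unfolding has_cluster_expansion_def by (auto simp: sum_distrib_left)

lemma has_cluster_expansion_sum:
  assumes "finite I" "\<forall>i\<in>I. \<exists>c. has_cluster_expansion t (f i) c"
  shows "\<exists>c. has_cluster_expansion t (\<lambda>G. \<Sum>i\<in>I. f i G) c"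
  using assms
proof (induction I rule: finite_induct)
  case empty
  then show ?case using has_cluster_expansion_zero by auto
next
  case (insert x F)
  then obtain c d where "has_cluster_expansion t (f x) c"
    and "has_cluster_expansion t (\<lambda>G. \<Sum>i\<in>F. f i G) d"
    by auto
  from has_cluster_expansion_add[OF this] show ?case
    using insert by auto
qed

definition cluster_mult ::
    "('v insect \<Rightarrow> complex) \<Rightarrow> ('v insect \<Rightarrow> complex) \<Rightarrow> 'v insect \<Rightarrow> complex" where
  "cluster_mult c d H = (if is_insect H then
     (\<Sum>p\<in>{p \<in> (Pow (fst H) - {{}}) \<times> (Pow (fst H) - {{}}). fst p \<union> snd p = fst H}.
        c (induced_plus H (fst p)) * d (induced_plus H (snd p))) else 0)"

lemma cluster_mult_support:
  assumes f: "has_cluster_expansion s f c" and g: "has_cluster_expansion r g d"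
    and nz: "cluster_mult c d H \<noteq> 0"
  shows "is_insect H \<and> insect_size H \<le> s + r"
proof -
  let ?pairs = "{p \<in> (Pow (fst H) - {{}}) \<times> (Pow (fst H) - {{}}). fst p \<union> snd p = fst H}"
  have H: "is_insect H"
    using nz by (simp add: cluster_mult_def split: if_splits)
  with nz have "(\<Sum>p\<in>?pairs. c (induced_plus H (fst p)) * d (induced_plus H (snd p))) \<noteq> 0"
    by (simp add: cluster_mult_def)
  then obtain p where p: "p \<in> ?pairs"
    and "c (induced_plus H (fst p)) * d (induced_plus H (snd p)) \<noteq> 0"
    by (meson sum.not_neutral_contains_not_neutral)
  then have "c (induced_plus H (fst p)) \<noteq> 0" "d (induced_plus H (snd p)) \<noteq> 0"
    by auto
  then have "card (fst p) \<le> s" "card (snd p) \<le> r"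
    using has_cluster_expansionD(1)[OF f] has_cluster_expansionD(1)[OF g]
    unfolding insect_size_def by (metis fst_induced_plus)+
  moreover have "card (fst H) \<le> card (fst p) + card (snd p)"
    using p card_Un_le[of "fst p" "snd p"] by simp
  ultimately show ?thesis
    using H by (simp add: insect_size_def)
qed

lemma has_cluster_expansion_mult:
  assumes f: "has_cluster_expansion s f c" and g: "has_cluster_expansion r g d"
  shows "has_cluster_expansion (s + r) (\<lambda>G. f G * g G) (cluster_mult c d)"
  unfolding has_cluster_expansion_def
proof (rule conjI; intro allI impI)
  fix H assume "cluster_mult c d H \<noteq> 0"
  then show "is_insect H \<and> insect_size H \<le> s + r"
    using cluster_mult_support[OF f g] by blast
next
  fix G :: "'a insect" assume G: "is_insect G"
  have fin: "finite (fst G)" using G by (simp add: is_insect_def)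
  let ?P = "Pow (fst G) - {{}}"
  let ?h = "\<lambda>p. c (induced_plus G (fst p)) * d (induced_plus G (snd p))"
  have "f G * g G = (\<Sum>U\<in>?P. c (induced_plus G U)) * (\<Sum>V\<in>?P. d (induced_plus G V))"
    using has_cluster_expansionD(2)[OF f G] has_cluster_expansionD(2)[OF g G] by simp
  also have "\<dots> = (\<Sum>p\<in>?P \<times> ?P. ?h p)"
    by (simp add: sum_product sum.cartesian_product case_prod_beta')
  also have "\<dots> = (\<Sum>W\<in>?P. \<Sum>p\<in>{p. p \<in> ?P \<times> ?P \<and> fst p \<union> snd p = W}. ?h p)"
    by (rule sum.group[symmetric]) (use fin in auto)
  also have "\<dots> = (\<Sum>W\<in>?P. cluster_mult c d (induced_plus G W))"
  proof (rule sum.cong[OF refl])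
    fix W assume W: "W \<in> ?P"
    let ?pairs = "{p \<in> (Pow W - {{}}) \<times> (Pow W - {{}}). fst p \<union> snd p = W}"
    have "cluster_mult c d (induced_plus G W) = (\<Sum>p\<in>?pairs.
        c (induced_plus (induced_plus G W) (fst p)) * d (induced_plus (induced_plus G W) (snd p)))"
      using W G is_insect_induced_plus[of G W] by (simp add: cluster_mult_def)
    also have "\<dots> = (\<Sum>p\<in>?pairs. ?h p)"
      by (rule sum.cong) auto
    also have "?pairs = {p. p \<in> ?P \<times> ?P \<and> fst p \<union> snd p = W}"
      using W by auto
    finally show "(\<Sum>p\<in>{p. p \<in> ?P \<times> ?P \<and> fst p \<union> snd p = W}. ?h p)
        = cluster_mult c d (induced_plus G W)"
      by simp
  qed
  finally show "f G * g G = (\<Sum>W\<in>?P. cluster_mult c d (induced_plus G W))" .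
qed

definition weight :: "('v set \<Rightarrow> 'v set \<Rightarrow> complex) \<Rightarrow> 'v insect \<Rightarrow> 'v set \<Rightarrow> complex" where
  "weight \<phi> H S = (\<Prod>e\<in>{e \<in> snd H. e \<inter> S \<noteq> {}}. \<phi> e (S \<inter> e))"

definition elem_sym_coeff :: "('v set \<Rightarrow> 'v set \<Rightarrow> complex) \<Rightarrow> nat \<Rightarrow> 'v insect \<Rightarrow> complex" where
  "elem_sym_coeff \<phi> i H =
     (if is_insect H \<and> insect_size H = i then (-1) ^ i * weight \<phi> H (fst H) else 0)"

lemma has_cluster_expansion_elem_sym:
  fixes \<phi> :: "'v set \<Rightarrow> 'v set \<Rightarrow> complex"
  assumes "i \<ge> 1"
  shows "has_cluster_expansion i (\<lambda>G. elem_sym \<phi> G i) (elem_sym_coeff \<phi> i)"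
  unfolding has_cluster_expansion_def
proof (rule conjI; intro allI impI)
  fix H assume "elem_sym_coeff \<phi> i H \<noteq> 0"
  then show "is_insect H \<and> insect_size H \<le> i"
    by (simp add: elem_sym_coeff_def split: if_splits)
next
  fix G :: "'v insect" assume G: "is_insect G"
  have fin: "finite (fst G)" using G by (simp add: is_insect_def)
  have "elem_sym \<phi> G i = (\<Sum>S\<in>{S. S \<subseteq> fst G \<and> card S = i}. (-1) ^ i * weight \<phi> G S)"
    using assms by (simp add: elem_sym_def weight_def sum_distrib_left)
  also have "\<dots> = (\<Sum>U\<in>Pow (fst G) - {{}}. if card U = i then (-1) ^ i * weight \<phi> G U else 0)"
    by (rule sum.mono_neutral_cong_left) (use fin assms in auto)
  also have "\<dots> = (\<Sum>U\<in>Pow (fst G) - {{}}. elem_sym_coeff \<phi> i (induced_plus G U))"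
    using G by (intro sum.cong)
      (auto simp: elem_sym_coeff_def insect_size_def is_insect_induced_plus weight_def intro!: prod.cong)
  finally show "elem_sym \<phi> G i = (\<Sum>U\<in>Pow (fst G) - {{}}. elem_sym_coeff \<phi> i (induced_plus G U))" .
qed

lemma power_sum_has_cluster_expansion:
  "t \<ge> 1 \<Longrightarrow> \<exists>c. has_cluster_expansion t (power_sum \<phi> t) c"
proof (induction t rule: less_induct)
  case (less t)
  let ?term = "\<lambda>i G. (-1) ^ (i - 1) * power_sum \<phi> (t - i) G * elem_sym \<phi> G i"
  have newton: "power_sum \<phi> t =
      (\<lambda>G. (\<Sum>i\<in>{1..<t}. ?term i G) + (-1) ^ (t - 1) * of_nat t * elem_sym \<phi> G t)"
    using less.prems by (intro ext) (simp add: power_sum_def newton_p.simps[of _ t])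
  have "\<exists>c. has_cluster_expansion t (?term i) c" if i: "i \<in> {1..<t}" for i
  proof -
    have "t - i < t" "1 \<le> t - i" using i by auto
    then obtain c where "has_cluster_expansion (t - i) (power_sum \<phi> (t - i)) c"
      using less.IH by blast
    from has_cluster_expansion_mult[OF this has_cluster_expansion_elem_sym[of i \<phi>]]
    have "has_cluster_expansion t (\<lambda>G. power_sum \<phi> (t - i) G * elem_sym \<phi> G i)
        (cluster_mult c (elem_sym_coeff \<phi> i))"
      using i by simp
    from has_cluster_expansion_scale[OF this, of "(-1) ^ (i - 1)"] show ?thesis
      by (auto simp: mult.assoc)
  qed
  then obtain c\<^sub>1 where "has_cluster_expansion t (\<lambda>G. \<Sum>i\<in>{1..<t}. ?term i G) c\<^sub>1"
    using has_cluster_expansion_sum[of "{1..<t}" t ?term] by blast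
  from has_cluster_expansion_add[OF this
      has_cluster_expansion_scale[OF has_cluster_expansion_elem_sym[OF less.prems]]]
  show ?case
    unfolding newton by blast
qed

section \<open>Additivity over separated parts\<close>

definition separated :: "'v insect \<Rightarrow> 'v set \<Rightarrow> 'v set \<Rightarrow> bool" where
  "separated H A B \<longleftrightarrow> A \<union> B = fst H \<and> A \<inter> B = {} \<and> A \<noteq> {} \<and> B \<noteq> {} \<and>
     (\<forall>e\<in>snd H. e \<inter> A = {} \<or> e \<inter> B = {})"

lemma not_insect_connected_imp_separated:
  assumes "\<not> insect_connected H"
  obtains A B where "separated H A B"
proof -
  from assms obtain u w where u: "u \<in> fst H" and w: "w \<in> fst H"
    and not_reach: "(u, w) \<notin> (adj_rel H)\<^sup>*"
    unfolding insect_connected_def by blast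
  define A where "A = {x \<in> fst H. (u, x) \<in> (adj_rel H)\<^sup>*}"
  define B where "B = fst H - A"
  have "\<forall>e\<in>snd H. e \<inter> A = {} \<or> e \<inter> B = {}"
  proof (rule ccontr)
    assume "\<not> ?thesis"
    then obtain e x y where e: "e \<in> snd H" "x \<in> e" "x \<in> A" "y \<in> e" "y \<in> B" by blast
    then have "(x, y) \<in> adj_rel H"
      unfolding adj_rel_def A_def B_def by auto
    with e(3) have "(u, y) \<in> (adj_rel H)\<^sup>*"
      unfolding A_def by auto
    then show False
      using e(5) by (auto simp: A_def B_def)
  qed
  moreover have "u \<in> A" "w \<in> B"
    using u w not_reach by (simp_all add: A_def B_def)
  ultimately have "separated H A B"
    unfolding separated_def by (auto simp: A_def B_def)
  then show thesis ..
qed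

lemma separated_induced_plus:
  assumes "separated H A B" "U \<subseteq> fst H" "U \<inter> A \<noteq> {}" "U \<inter> B \<noteq> {}"
  shows "separated (induced_plus H U) (U \<inter> A) (U \<inter> B)"
  using assms unfolding separated_def by auto

lemma sum_Pow_Un_disjoint:
  assumes "finite A" "finite B" "A \<inter> B = {}"
  shows "sum f (Pow (A \<union> B)) = (\<Sum>S\<^sub>1\<in>Pow A. \<Sum>S\<^sub>2\<in>Pow B. f (S\<^sub>1 \<union> S\<^sub>2))"
proof -
  have "bij_betw (\<lambda>(x, y). x \<union> y) (Pow A \<times> Pow B) (Pow (A \<union> B))"
    by (rule bij_betwI[where g = "\<lambda>S. (S \<inter> A, S \<inter> B)"]) (use assms in auto)
  then have "sum f (Pow (A \<union> B)) = sum (f \<circ> (\<lambda>(x, y). x \<union> y)) (Pow A \<times> Pow B)"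
    by (simp add: sum.reindex_bij_betw)
  then show ?thesis
    by (simp add: sum.cartesian_product case_prod_beta')
qed

lemma weight_separated:
  assumes sep: "separated H A B" and "S\<^sub>1 \<subseteq> A" "S\<^sub>2 \<subseteq> B" and fin: "finite (snd H)"
  shows "weight \<phi> H (S\<^sub>1 \<union> S\<^sub>2) = weight \<phi> (induced_plus H A) S\<^sub>1 * weight \<phi> (induced_plus H B) S\<^sub>2"
proof -
  let ?E\<^sub>1 = "{e \<in> {e \<in> snd H. e \<inter> A \<noteq> {}}. e \<inter> S\<^sub>1 \<noteq> {}}"
  let ?E\<^sub>2 = "{e \<in> {e \<in> snd H. e \<inter> B \<noteq> {}}. e \<inter> S\<^sub>2 \<noteq> {}}"
  have edges: "{e \<in> snd H. e \<inter> (S\<^sub>1 \<union> S\<^sub>2) \<noteq> {}} = ?E\<^sub>1 \<union> ?E\<^sub>2"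
    using assms by auto
  have restrict\<^sub>1: "(S\<^sub>1 \<union> S\<^sub>2) \<inter> e = S\<^sub>1 \<inter> e" if "e \<in> ?E\<^sub>1" for e
  proof -
    have "e \<inter> B = {}" using that sep unfolding separated_def by auto
    then show ?thesis using assms(3) by blast
  qed
  have restrict\<^sub>2: "(S\<^sub>1 \<union> S\<^sub>2) \<inter> e = S\<^sub>2 \<inter> e" if "e \<in> ?E\<^sub>2" for e
  proof -
    have "e \<inter> A = {}" using that sep unfolding separated_def by auto
    then show ?thesis using assms(2) by blast
  qed
  have "weight \<phi> H (S\<^sub>1 \<union> S\<^sub>2) =
      (\<Prod>e\<in>?E\<^sub>1. \<phi> e ((S\<^sub>1 \<union> S\<^sub>2) \<inter> e)) * (\<Prod>e\<in>?E\<^sub>2. \<phi> e ((S\<^sub>1 \<union> S\<^sub>2) \<inter> e))"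
    unfolding weight_def edges
    by (rule prod.union_disjoint) (use fin sep in \<open>auto simp: separated_def\<close>)
  also have "\<dots> = (\<Prod>e\<in>?E\<^sub>1. \<phi> e (S\<^sub>1 \<inter> e)) * (\<Prod>e\<in>?E\<^sub>2. \<phi> e (S\<^sub>2 \<inter> e))"
    using restrict\<^sub>1 restrict\<^sub>2 by (intro arg_cong2[where f = "(*)"] prod.cong) auto
  finally show ?thesis
    by (simp add: weight_def)
qed

definition weight_fps :: "('v set \<Rightarrow> 'v set \<Rightarrow> complex) \<Rightarrow> 'v insect \<Rightarrow> complex fps" where
  "weight_fps \<phi> H = (\<Sum>S\<in>Pow (fst H). fps_const (weight \<phi> H S) * fps_X ^ card S)"

lemma partition_fps_elem_sym:
  assumes fin: "finite (fst H)"
  shows "partition_fps (elem_sym \<phi> H) = weight_fps \<phi> H"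
proof (rule fps_ext)
  fix n
  have "fps_nth (weight_fps \<phi> H) n = (\<Sum>S\<in>Pow (fst H). if card S = n then weight \<phi> H S else 0)"
    by (simp add: weight_fps_def fps_sum_nth fps_const_mult_left eq_commute[of n] if_distrib
        cong: if_cong)
  also have "\<dots> = (\<Sum>S\<in>{S. S \<subseteq> fst H \<and> card S = n}. weight \<phi> H S)"
    by (rule sum.mono_neutral_cong_right) (use fin in auto)
  finally have coeff: "fps_nth (weight_fps \<phi> H) n = (\<Sum>S\<in>{S. S \<subseteq> fst H \<and> card S = n}. weight \<phi> H S)" .
  show "fps_nth (partition_fps (elem_sym \<phi> H)) n = fps_nth (weight_fps \<phi> H) n"
  proof (cases "n = 0")
    case True
    have "{S. S \<subseteq> fst H \<and> card S = 0} = {{}}"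
      using fin by (auto dest: finite_subset)
    then show ?thesis
      using True coeff by (simp add: partition_fps_def elem_sym_def weight_def)
  next
    case False
    then show ?thesis
      using coeff by (simp add: partition_fps_def elem_sym_def weight_def
          mult.assoc[symmetric] power_mult_distrib[symmetric])
  qed
qed

lemma weight_fps_separated:
  assumes H: "is_insect H" and sep: "separated H A B"
  shows "weight_fps \<phi> H = weight_fps \<phi> (induced_plus H A) * weight_fps \<phi> (induced_plus H B)"
proof -
  have fin: "finite (fst H)" "finite (snd H)" using H by (auto simp: is_insect_def)
  have AB: "fst H = A \<union> B" "A \<inter> B = {}" using sep by (auto simp: separated_def)
  then have finAB: "finite A" "finite B" using fin by auto
  have "weight_fps \<phi> H = (\<Sum>S\<^sub>1\<in>Pow A. \<Sum>S\<^sub>2\<in>Pow B.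
      fps_const (weight \<phi> H (S\<^sub>1 \<union> S\<^sub>2)) * fps_X ^ card (S\<^sub>1 \<union> S\<^sub>2))"
    unfolding weight_fps_def AB(1) by (rule sum_Pow_Un_disjoint) (use finAB AB in auto)
  also have "\<dots> = (\<Sum>S\<^sub>1\<in>Pow A. \<Sum>S\<^sub>2\<in>Pow B.
      (fps_const (weight \<phi> (induced_plus H A) S\<^sub>1) * fps_X ^ card S\<^sub>1) *
      (fps_const (weight \<phi> (induced_plus H B) S\<^sub>2) * fps_X ^ card S\<^sub>2))"
  proof (intro sum.cong refl)
    fix S\<^sub>1 S\<^sub>2 assume S: "S\<^sub>1 \<in> Pow A" "S\<^sub>2 \<in> Pow B"
    then have "card (S\<^sub>1 \<union> S\<^sub>2) = card S\<^sub>1 + card S\<^sub>2"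
      using finAB AB by (intro card_Un_disjoint) (auto intro: finite_subset)
    then show "fps_const (weight \<phi> H (S\<^sub>1 \<union> S\<^sub>2)) * fps_X ^ card (S\<^sub>1 \<union> S\<^sub>2) =
      (fps_const (weight \<phi> (induced_plus H A) S\<^sub>1) * fps_X ^ card S\<^sub>1) *
      (fps_const (weight \<phi> (induced_plus H B) S\<^sub>2) * fps_X ^ card S\<^sub>2)"
      using weight_separated[OF sep _ _ fin(2), of S\<^sub>1 S\<^sub>2 \<phi>] S
      by (simp add: power_add mult_ac fps_const_mult[symmetric] del: fps_const_mult)
  qed
  also have "\<dots> = weight_fps \<phi> (induced_plus H A) * weight_fps \<phi> (induced_plus H B)"
    by (simp add: weight_fps_def sum_product)
  finally show ?thesis .
qed

lemma power_sum_separated: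
  assumes H: "is_insect H" and sep: "separated H A B"
  shows "power_sum \<phi> t H = power_sum \<phi> t (induced_plus H A) + power_sum \<phi> t (induced_plus H B)"
proof -
  have "finite (fst H)" using H by (simp add: is_insect_def)
  moreover have "A \<subseteq> fst H" "B \<subseteq> fst H" using sep by (auto simp: separated_def)
  ultimately have "finite A" "finite B" by (auto intro: finite_subset)
  then have "partition_fps (elem_sym \<phi> H) =
      partition_fps (elem_sym \<phi> (induced_plus H A)) * partition_fps (elem_sym \<phi> (induced_plus H B))"
    using partition_fps_elem_sym[of H \<phi>] H weight_fps_separated[OF H sep, of \<phi>]
    by (simp add: partition_fps_elem_sym is_insect_def)
  then show ?thesis
    unfolding power_sum_def by (intro newton_p_partition_fps_mult) (simp_all add: elem_sym_def)
qed

section \<open>Coefficients of additive invariants vanish on disconnected insects\<close>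

lemma has_cluster_expansion_induced_plus:
  assumes f: "has_cluster_expansion t f c" and H: "is_insect H"
    and A: "A \<subseteq> fst H" "A \<noteq> {}"
  shows "f (induced_plus H A) = (\<Sum>U\<in>Pow A - {{}}. c (induced_plus H U))"
proof -
  have "f (induced_plus H A) = (\<Sum>U\<in>Pow A - {{}}. c (induced_plus (induced_plus H A) U))"
    using has_cluster_expansionD(2)[OF f is_insect_induced_plus[OF H A]] by simp
  also have "\<dots> = (\<Sum>U\<in>Pow A - {{}}. c (induced_plus H U))"
    by (intro sum.cong) auto
  finally show ?thesis .
qed

lemma cluster_coeff_separated_eq_0:
  assumes f: "has_cluster_expansion t f c"
    and additive: "\<And>H A B. is_insect H \<Longrightarrow> separated H A B \<Longrightarrow>
      f H = f (induced_plus H A) + f (induced_plus H B)"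
  shows "is_insect H \<Longrightarrow> separated H A B \<Longrightarrow> c H = 0"
proof (induction "card (fst H)" arbitrary: H A B rule: less_induct)
  case less
  note H = less.prems(1) and sep = less.prems(2)
  have fin: "finite (fst H)" using H by (simp add: is_insect_def)
  have AB: "fst H = A \<union> B" "A \<inter> B = {}" "A \<noteq> {}" "B \<noteq> {}"
    using sep by (auto simp: separated_def)
  define M where "M = {U \<in> Pow (fst H) - {{}}. U \<inter> A \<noteq> {} \<and> U \<inter> B \<noteq> {}}"
  have parts: "Pow (fst H) - {{}} = (Pow A - {{}}) \<union> ((Pow B - {{}}) \<union> M)"
    using AB by (auto simp: M_def)
  have "finite M" using fin by (simp add: M_def)
  \<comment> \<open>Every proper mixed \<open>U\<close> is itself separated, so only \<open>U = fst H\<close> survives.\<close>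
  have mixed: "(\<Sum>U\<in>M. c (induced_plus H U)) = c H"
  proof -
    have "(\<Sum>U\<in>M. c (induced_plus H U)) = (\<Sum>U\<in>{fst H}. c (induced_plus H U))"
    proof (rule sum.mono_neutral_right)
      show "{fst H} \<subseteq> M" using AB by (auto simp: M_def)
      show "\<forall>U\<in>M - {fst H}. c (induced_plus H U) = 0"
      proof
        fix U assume "U \<in> M - {fst H}"
        then have U: "U \<subseteq> fst H" "U \<noteq> fst H" "U \<inter> A \<noteq> {}" "U \<inter> B \<noteq> {}" "U \<noteq> {}"
          by (auto simp: M_def)
        then have "card U < card (fst H)" using fin by (simp add: psubset_card_mono)
        then show "c (induced_plus H U) = 0"
          using less.hyps[of "induced_plus H U" "U \<inter> A" "U \<inter> B"]
            is_insect_induced_plus[OF H U(1) U(5)] separated_induced_plus[OF sep U(1) U(3) U(4)]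
          by simp
      qed
    qed fact
    then show ?thesis using induced_plus_fst[OF H] by simp
  qed
  have "f H = (\<Sum>U\<in>Pow (fst H) - {{}}. c (induced_plus H U))"
    using has_cluster_expansionD(2)[OF f H] .
  also have "\<dots> = (\<Sum>U\<in>Pow A - {{}}. c (induced_plus H U)) +
      ((\<Sum>U\<in>Pow B - {{}}. c (induced_plus H U)) + (\<Sum>U\<in>M. c (induced_plus H U)))"
  proof -
    have "(Pow A - {{}}) \<inter> ((Pow B - {{}}) \<union> M) = {}" "(Pow B - {{}}) \<inter> M = {}"
      using AB by (auto simp: M_def)
    then show ?thesis
      unfolding parts using fin AB \<open>finite M\<close> by (simp add: sum.union_disjoint)
  qed
  also have "\<dots> = f (induced_plus H A) + (f (induced_plus H B) + c H)"
    using has_cluster_expansion_induced_plus[OF f H] AB mixed by simp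
  finally show ?case
    using additive[OF H sep] by simp
qed

theorem mainTheorem11:
  fixes \<phi> :: "'v set \<Rightarrow> 'v set \<Rightarrow> complex" and t :: nat
  assumes "\<forall>e. \<phi> e {} = 1"
    and "t \<ge> 1"
  shows "\<exists>a :: 'v insect \<Rightarrow> complex.
     (\<forall>H. a H \<noteq> 0 \<longrightarrow> is_insect H \<and> insect_connected H \<and> insect_size H \<le> t) \<and>
     (\<forall>G. is_insect G \<longrightarrow>
        power_sum \<phi> t G = (\<Sum>H\<in>{H. sub_insect H G}. a H))"
proof -
  obtain c where c: "has_cluster_expansion t (power_sum \<phi> t) c"
    using power_sum_has_cluster_expansion[OF assms(2)] by blast
  have connected: "insect_connected H" if "is_insect H" "c H \<noteq> 0" for H
  proof (rule ccontr)
    assume "\<not> insect_connected H"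
    then obtain A B where "separated H A B"
      by (rule not_insect_connected_imp_separated)
    with that show False
      using cluster_coeff_separated_eq_0[OF c power_sum_separated] by blast
  qed
  have "power_sum \<phi> t G = (\<Sum>H\<in>{H. sub_insect H G}. c H)" if G: "is_insect G" for G
  proof -
    have "{H. sub_insect H G} = induced_plus G ` (Pow (fst G) - {{}})"
      by (auto simp: sub_insect_def)
    moreover have "inj_on (induced_plus G) (Pow (fst G) - {{}})"
      by (rule inj_onI) (metis fst_induced_plus)
    ultimately show ?thesis
      using has_cluster_expansionD(2)[OF c G] by (simp add: sum.reindex)
  qed
  then show ?thesis
    using has_cluster_expansionD(1)[OF c] connected by blast
qed

end
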